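(* Let $U^{(n)}$ be uniformly distributed on $\{1,\dots,n\}$ and, for $1\le m<n$, put $\widetilde U^{(n,m)}:=\prod_{m<p\le n,\ p\ \text{prime}}p^{\mathbbm{1}_{\{\lambda_p(U^{(n)})\ge1\}}}$. Assume that $m_n\le n^{1/2}$ for all sufficiently large $n$ and $m_n\to\infty$ as $n\to\infty$. Then $${\rm Var}\bigl(\log\widetilde U^{(n,m_n)}\bigr)\sim 2^{-1}\log^2 m_n,\qquad n\to\infty.$$
   Context: For a prime $p$ and $k\in\mathbb{N}$, $\lambda_p(k)$ is the exponent of $p$ in the prime factorization of $k$. $a_n\sim b_n$ means $a_n/b_n\to1$. *)

theory Defs
  imports "HOL-Probability.Probability" "HOL-Library.Landau_Symbols"
    "HOL-Computational_Algebra.Primes"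
begin

definition Utilde :: "nat \<Rightarrow> nat \<Rightarrow> nat \<Rightarrow> nat" where
  "Utilde n m k = (\<Prod>p \<in> {p. prime p \<and> m < p \<and> p \<le> n}.
      p ^ (if multiplicity p k \<ge> 1 then 1 else 0))"

end

theory Submission
  imports Defs
begin

text \<open>For \<open>1 \<le> k \<le> n\<close> write \<open>ln k = A k + X k + D k\<close>, where \<open>A k\<close> sums \<open>ln p\<close> over the prime
  divisors \<open>p \<le> m\<close> of \<open>k\<close>, \<open>X k = ln (Utilde n m k)\<close> does the same for \<open>m < p \<le> n\<close>, and
  \<open>D k\<close> collects the contributions of the prime powers \<open>p\<^sup>j \<bar> k\<close> with \<open>j \<ge> 2\<close>. Under the
  uniform distribution on \<open>{1..n}\<close> both \<open>ln k\<close> (which is concentrated near \<open>ln n\<close>) and \<open>D\<close>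
  have bounded variance, so the standard deviations of \<open>X\<close> and \<open>A\<close> differ by \<open>O(1)\<close>.
  If \<open>m\<^sup>2 \<le> n\<close>, the indicators of \<open>p \<bar> k\<close> for distinct primes \<open>p, q \<le> m\<close> are almost
  uncorrelated, whence \<open>Var A = \<Sum>\<^sub>p\<^sub>\<le>\<^sub>m ln\<^sup>2 p / p + O(1) = ln\<^sup>2 m / 2 + O(ln m)\<close> by
  Mertens' theorem and summation by parts. So \<open>sd X = ln m / sqrt 2 + O(1)\<close>, and \<open>ln m \<rightarrow> \<infinity>\<close>.\<close>

lemma real_div_nat_le: "real (x div d) \<le> real x / real d"
  using of_int_floor_le[of "real x / real d"] by (simp add: floor_divide_of_nat_eq)

lemma real_div_nat_ge: "real x / real d - 1 \<le> real (x div d)"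
  using real_of_int_floor_gt_diff_one[of "real x / real d"] by (simp add: floor_divide_of_nat_eq)

lemma ln_sq_le_16_sqrt:
  assumes "1 \<le> (y::real)"
  shows "(ln y)^2 \<le> 16 * sqrt y"
proof -
  have "ln y = 4 * ln (sqrt (sqrt y))"
    using assms by (simp add: ln_sqrt)
  also have "\<dots> \<le> 4 * sqrt (sqrt y)"
    using assms by (intro mult_left_mono ln_le_minus_one[THEN order.trans]) auto
  finally have "(ln y)^2 \<le> (4 * sqrt (sqrt y))^2"
    using assms by (intro power_mono) auto
  also have "\<dots> = 16 * sqrt y"
    using assms by (simp add: power_mult_distrib)
  finally show ?thesis .
qed

lemma summable_ln_sq_over_sq: "summable (\<lambda>k. (ln (real k))^2 / (real k)^2)"
proof (rule summable_comparison_test'[where N = 1])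
  show "summable (\<lambda>k. 16 * real k powr (-3/2))"
    by (intro summable_mult) (simp add: summable_real_powr_iff)
next
  fix k :: nat
  assume "1 \<le> k"
  then have "(ln (real k))^2 / (real k)^2 \<le> 16 * sqrt (real k) / (real k)^2"
    by (intro divide_right_mono ln_sq_le_16_sqrt) auto
  also have "\<dots> = 16 * (real k powr (1/2) / real k powr 2)"
    using \<open>1 \<le> k\<close> by (simp add: powr_half_sqrt powr_realpow)
  also have "\<dots> = 16 * real k powr (-3/2)"
    using powr_diff[of "real k" "1/2" 2] by simp
  finally show "norm ((ln (real k))^2 / (real k)^2) \<le> 16 * real k powr (-3/2)"
    by simp
qed

lemma sum_ln_sq_over_sq_le_suminf:
  "finite A \<Longrightarrow> (\<Sum>k\<in>A. (ln (real k))^2 / (real k)^2) \<le> (\<Sum>k. (ln (real k))^2 / (real k)^2)"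
  by (rule sum_le_suminf[OF summable_ln_sq_over_sq]) auto

lemma sum_power_from_2_le:
  assumes "0 \<le> r" "r < (1::real)"
  shows "(\<Sum>j=2..N. r^j) \<le> r^2 / (1 - r)"
proof (cases "N < 2")
  case False
  then have "(\<Sum>j=2..N. r^j) = (r^2 - r^Suc N) / (1 - r)"
    using assms by (subst sum_gp) auto
  also have "\<dots> \<le> r^2 / (1 - r)"
    using assms by (intro divide_right_mono) auto
  finally show ?thesis .
qed (use assms in simp)

lemma sum_inverse_sqrt_le: "(\<Sum>k=1..n. 1 / sqrt (real k)) \<le> 2 * sqrt (real n)"
proof (induction n)
  case (Suc n)
  define x y where "x = sqrt (real n)" and "y = sqrt (real (Suc n))"
  have "y > 0" "y^2 = x^2 + 1"
    unfolding x_def y_def by auto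
  moreover have "2 * x * y \<le> x^2 + y^2"
    by (rule sum_squares_bound)
  ultimately have "2 * x + 1 / y \<le> 2 * y"
    by (simp add: field_simps power2_eq_square)
  with Suc.IH show ?case
    unfolding x_def y_def by simp
qed simp

lemma ln_fact_le: "ln (fact x :: real) \<le> real x * ln (real x)"
proof (cases "x = 0")
  case False
  have "(fact x :: real) \<le> real x ^ x"
    using fact_le_power[of x, where 'a = real] by simp
  then have "ln (fact x :: real) \<le> ln (real x ^ x)"
    using False by (subst ln_le_cancel_iff) auto
  then show ?thesis
    using False by (simp add: ln_realpow)
qed simp

lemma ln_fact_ge: "real x * ln (real x) - real x \<le> ln (fact x :: real)"
proof (induction x)
  case (Suc n)
  have "real n * (ln (real (Suc n)) - ln (real n)) \<le> 1"
  proof (cases "n = 0")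
    case False
    have "ln (real (Suc n) / real n) \<le> real (Suc n) / real n - 1"
      using False by (intro ln_le_minus_one) auto
    then show ?thesis
      using False by (simp add: ln_div field_simps)
  qed simp
  moreover have "ln (fact (Suc n) :: real) = ln (fact n) + ln (real (Suc n))"
    by (simp add: ln_mult fact_Suc del: of_nat_Suc)
  ultimately show ?case
    using Suc.IH by (simp add: algebra_simps)
qed simp

lemma asymp_equiv_of_bounded_diff:
  fixes f g :: "'a \<Rightarrow> real"
  assumes "eventually (\<lambda>x. \<bar>f x - g x\<bar> \<le> C) F" and "filterlim g at_top F"
  shows "f \<sim>[F] g"
proof (rule smallo_imp_asymp_equiv)
  have "(\<lambda>x. f x - g x) \<in> O[F](\<lambda>_. 1)"
    using assms(1) by (intro bigoI[of _ C]) (auto elim: eventually_mono)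
  moreover have "(\<lambda>_. 1) \<in> o[F](g)"
    using assms(2) by (simp add: smallomega_iff_smallo[symmetric] smallomega_1_conv_filterlim
        filterlim_at_top_imp_at_infinity)
  ultimately show "(\<lambda>x. f x - g x) \<in> o[F](g)"
    by (rule landau_o.big_small_trans)
qed

lemma abs_sqrt_minus_le:
  assumes "0 \<le> v" "0 < t"
  shows "\<bar>sqrt v - t\<bar> \<le> \<bar>v - t^2\<bar> / t"
proof -
  have "v - t^2 = (sqrt v - t) * (sqrt v + t)"
    using assms by (simp add: power2_eq_square algebra_simps)
  then have "\<bar>v - t^2\<bar> = \<bar>sqrt v - t\<bar> * (sqrt v + t)"
    using assms by (simp add: abs_mult)
  also have "\<dots> \<ge> \<bar>sqrt v - t\<bar> * t"
    using assms by (intro mult_left_mono) auto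
  finally show ?thesis
    using assms by (simp add: le_divide_eq)
qed

section \<open>Logarithms as sums over prime powers\<close>

definition primes_le :: "nat \<Rightarrow> nat set" where
  "primes_le x = {p. prime p \<and> p \<le> x}"

lemma mem_primes_le [simp]: "p \<in> primes_le x \<longleftrightarrow> prime p \<and> p \<le> x"
  by (simp add: primes_le_def)

lemma finite_primes_le [simp]: "finite (primes_le x)"
  by (rule finite_subset[of _ "{..x}"]) auto

lemma primes_le_Suc:
  "primes_le (Suc x) = (if prime (Suc x) then insert (Suc x) (primes_le x) else primes_le x)"
  by (auto simp: le_Suc_eq)

lemma ln_prime_ge_half:
  assumes "prime p"
  shows "1/2 \<le> ln (real p)"
proof -
  have "ln 2 \<le> ln (real p)"
    using prime_ge_2_nat[OF assms] by simp
  then show ?thesis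
    using ln2_ge_two_thirds by linarith
qed

lemma ln_prime_nonneg: "prime p \<Longrightarrow> 0 \<le> ln (real p)"
  using ln_prime_ge_half[of p] by linarith

lemma card_multiples_atLeastAtMost:
  assumes "0 < d"
  shows "card ({1..n} \<inter> {k. d dvd k}) = n div d"
proof -
  have "{1..n} \<inter> {k. d dvd k} = (\<lambda>i. d * i) ` {1..n div d}"
  proof safe
    fix k
    assume "k \<in> {1..n}" "d dvd k"
    with assms show "k \<in> (\<lambda>i. d * i) ` {1..n div d}"
      by (auto simp: less_eq_div_iff_mult_less_eq mult.commute elim!: dvdE)
  qed (use assms in \<open>auto simp: less_eq_div_iff_mult_less_eq mult.commute\<close>)
  also have "card \<dots> = n div d"
    using assms by (subst card_image) (auto simp: inj_on_def)
  finally show ?thesis .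
qed

lemma multiplicity_eq_card_prime_power_divisors:
  assumes "prime p" "1 \<le> k" "k \<le> N"
  shows "multiplicity p k = card {j\<in>{1..N}. p^j dvd k}"
proof -
  have "multiplicity p k < 2 ^ multiplicity p k"
    by (rule less_exp)
  also have "\<dots> \<le> p ^ multiplicity p k"
    using prime_ge_2_nat[OF assms(1)] by (intro power_mono) auto
  also have "\<dots> \<le> k"
    using assms(2) by (intro dvd_imp_le multiplicity_dvd) auto
  finally have "multiplicity p k \<le> N"
    using assms(3) by linarith
  moreover have "k \<noteq> 0" "\<not> is_unit p"
    using assms by auto
  ultimately have "{j\<in>{1..N}. p^j dvd k} = {1..multiplicity p k}"
    by (auto simp: power_dvd_iff_le_multiplicity)
  then show ?thesis by simp
qed

lemma ln_eq_sum_prime_power_divisors: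
  assumes "1 \<le> k" "k \<le> N"
  shows "ln (real k) = (\<Sum>p\<in>primes_le N. \<Sum>j=1..N. ln (real p) * of_bool (p^j dvd k))"
proof -
  have "ln (real k) = ln (real (\<Prod>p\<in>prime_factors k. p ^ multiplicity p k))"
    using prime_factorization_nat[of k] assms by simp
  also have "\<dots> = (\<Sum>p\<in>prime_factors k. real (multiplicity p k) * ln (real p))"
    by (simp only: of_nat_prod of_nat_power, subst ln_prod)
       (auto simp: ln_realpow prime_gt_0_nat in_prime_factors_iff)
  also have "\<dots> = (\<Sum>p\<in>primes_le N. real (multiplicity p k) * ln (real p))"
    using assms
    by (intro sum.mono_neutral_left)
       (auto simp: in_prime_factors_iff not_dvd_imp_multiplicity_0 dest!: dvd_imp_le)
  also have "\<dots> = (\<Sum>p\<in>primes_le N. \<Sum>j=1..N. ln (real p) * of_bool (p^j dvd k))"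
    using assms multiplicity_eq_card_prime_power_divisors
    by (intro sum.cong) (simp_all add: Int_def)
  finally show ?thesis .
qed

lemma ln_fact_eq_sum_prime_powers:
  assumes "x \<le> N"
  shows "ln (fact x :: real) = (\<Sum>p\<in>primes_le N. \<Sum>j=1..N. ln (real p) * real (x div p^j))"
proof -
  have "ln (fact x :: real) = (\<Sum>k=1..x. ln (real k))"
    by (simp add: fact_prod, subst ln_prod) auto
  also have "\<dots> = (\<Sum>k=1..x. \<Sum>p\<in>primes_le N. \<Sum>j=1..N. ln (real p) * of_bool (p^j dvd k))"
    using assms by (intro sum.cong refl ln_eq_sum_prime_power_divisors) auto
  also have "\<dots> = (\<Sum>p\<in>primes_le N. \<Sum>k=1..x. \<Sum>j=1..N. ln (real p) * of_bool (p^j dvd k))"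
    by (rule sum.swap)
  also have "\<dots> = (\<Sum>p\<in>primes_le N. \<Sum>j=1..N. \<Sum>k=1..x. ln (real p) * of_bool (p^j dvd k))"
    by (intro sum.cong refl sum.swap)
  also have "\<dots> = (\<Sum>p\<in>primes_le N. \<Sum>j=1..N. ln (real p) * real (x div p^j))"
  proof (intro sum.cong refl)
    fix p j
    assume "p \<in> primes_le N"
    then have "card ({1..x} \<inter> {k. p^j dvd k}) = x div p^j"
      by (intro card_multiples_atLeastAtMost) (simp add: prime_gt_0_nat)
    then show "(\<Sum>k=1..x. ln (real p) * of_bool (p^j dvd k)) = ln (real p) * real (x div p^j)"
      by (simp add: sum_distrib_left[symmetric])
  qed
  finally show ?thesis .
qed

section \<open>Chebyshev's bound and Mertens' first theorem\<close>

definition primes_theta :: "nat \<Rightarrow> real" where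
  "primes_theta x = (\<Sum>p\<in>primes_le x. ln (real p))"

lemma primes_theta_nonneg: "0 \<le> primes_theta x"
  unfolding primes_theta_def by (intro sum_nonneg) (simp add: ln_prime_nonneg)

text \<open>Every prime in \<open>(h', h + h']\<close> divides \<open>(h + h') choose h\<close>; this is read off from
  Legendre's formula, whose terms for the binomial coefficient are all nonnegative.\<close>
lemma sum_ln_primes_between_le_ln_binomial:
  assumes "h \<le> h'"
  shows "(\<Sum>p\<in>primes_le (h + h') - primes_le h'. ln (real p)) \<le> ln (real ((h + h') choose h))"
proof -
  define x where "x = h + h'"
  define c where "c q = real (x div q) - real (h div q) - real (h' div q)" for q
  have c_nonneg: "0 \<le> c q" for q
    using div_add1_eq[of h h' q] by (simp add: c_def x_def)
  have "ln (real (x choose h)) = ln (fact x) - ln (fact h) - ln (fact h')"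
    using binomial_fact[of h x, where 'a = real]
    by (simp add: x_def ln_div ln_mult)
  also have "\<dots> = (\<Sum>p\<in>primes_le x. \<Sum>j=1..x. ln (real p) * c (p^j))"
    using ln_fact_eq_sum_prime_powers[of x x] ln_fact_eq_sum_prime_powers[of h x]
      ln_fact_eq_sum_prime_powers[of h' x]
    by (simp add: x_def c_def sum_subtractf[symmetric] algebra_simps)
  finally have ln_binomial: "ln (real (x choose h)) = \<dots>" .
  have "(\<Sum>p\<in>primes_le x - primes_le h'. ln (real p))
      = (\<Sum>p\<in>primes_le x - primes_le h'. ln (real p) * c (p^1))"
  proof (intro sum.cong refl)
    fix p
    assume p: "p \<in> primes_le x - primes_le h'"
    then have "x div p = 1"
      using assms by (intro div_nat_eqI) (auto simp: x_def)
    moreover have "h div p = 0" "h' div p = 0"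
      using p assms by auto
    ultimately show "ln (real p) = ln (real p) * c (p^1)"
      by (simp add: c_def)
  qed
  also have "\<dots> \<le> (\<Sum>p\<in>primes_le x. ln (real p) * c (p^1))"
    by (intro sum_mono2) (auto intro!: mult_nonneg_nonneg c_nonneg ln_prime_nonneg)
  also have "\<dots> \<le> (\<Sum>p\<in>primes_le x. \<Sum>j=1..x. ln (real p) * c (p^j))"
    by (intro sum_mono member_le_sum)
       (auto intro!: mult_nonneg_nonneg c_nonneg ln_prime_nonneg dest: prime_gt_1_nat)
  finally show ?thesis
    using ln_binomial by (simp add: x_def)
qed

lemma primes_theta_le: "primes_theta x \<le> 4 * ln 2 * real x"
proof (induction x rule: less_induct)
  case (less x)
  show ?case
  proof (cases "x \<le> 1")
    case True
    then have "primes_le x = {}"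
      by (auto dest!: prime_ge_2_nat)
    then show ?thesis
      by (simp add: primes_theta_def)
  next
    case False
    define h h' where "h = x div 2" and "h' = x - x div 2"
    have x: "x = h + h'" "h \<le> h'" "h' < x" "2 * h' \<le> x + 1"
      using False by (auto simp: h_def h'_def)
    have "real (x choose h) \<le> 2 ^ x"
      using binomial_le_pow2[of x h] by (metis of_nat_le_iff of_nat_numeral of_nat_power)
    then have "ln (real (x choose h)) \<le> real x * ln 2"
      using x by (subst ln_realpow[symmetric]) auto
    moreover have "primes_theta x = primes_theta h' + (\<Sum>p\<in>primes_le x - primes_le h'. ln (real p))"
      unfolding primes_theta_def using x by (subst sum.subset_diff[of "primes_le h'"]) auto
    ultimately have "primes_theta x \<le> primes_theta h' + real x * ln 2"
      using sum_ln_primes_between_le_ln_binomial[of h h'] x by simp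
    also have "\<dots> \<le> 4 * ln 2 * real h' + real x * ln 2"
      using less.IH[of h'] x by simp
    also have "\<dots> \<le> 4 * ln 2 * real x"
      using x False ln2_ge_two_thirds by simp
    finally show ?thesis .
  qed
qed

lemma sum_inverse_powers_from_2_le:
  assumes "2 \<le> p"
  shows "(\<Sum>j=2..N. (1 / real p)^j) \<le> 2 / (real p)^2"
proof -
  have "(\<Sum>j=2..N. (1 / real p)^j) \<le> (1 / real p)^2 / (1 - 1 / real p)"
    using assms by (intro sum_power_from_2_le) auto
  also have "\<dots> \<le> (1 / real p)^2 / (1/2)"
    using assms by (intro divide_left_mono) auto
  finally show ?thesis
    by (simp add: power_divide)
qed

lemma sum_ln_prime_over_sq_le:
  "(\<Sum>p\<in>primes_le x. ln (real p) / (real p)^2) \<le> 2 * (\<Sum>k. (ln (real k))^2 / (real k)^2)"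
proof -
  have "(\<Sum>p\<in>primes_le x. ln (real p) / (real p)^2)
      \<le> (\<Sum>p\<in>primes_le x. 2 * ((ln (real p))^2 / (real p)^2))"
  proof (intro sum_mono)
    fix p
    assume "p \<in> primes_le x"
    then have "ln (real p) \<le> 2 * (ln (real p))^2"
      using ln_prime_ge_half[of p] by (simp add: power2_eq_square)
    then show "ln (real p) / (real p)^2 \<le> 2 * ((ln (real p))^2 / (real p)^2)"
      by (simp add: divide_right_mono)
  qed
  also have "\<dots> \<le> 2 * (\<Sum>k. (ln (real k))^2 / (real k)^2)"
    by (subst sum_distrib_left[symmetric]) (simp add: sum_ln_sq_over_sq_le_suminf)
  finally show ?thesis .
qed

definition primes_M :: "nat \<Rightarrow> real" where
  "primes_M x = (\<Sum>p\<in>primes_le x. ln (real p) / real p)"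

lemma primes_M_le:
  assumes "1 \<le> x"
  shows "primes_M x \<le> ln (real x) + 4 * ln 2"
proof -
  have "real x * primes_M x - primes_theta x = (\<Sum>p\<in>primes_le x. ln (real p) * (real x / real p - 1))"
    unfolding primes_M_def primes_theta_def
    by (simp add: sum_distrib_left sum_subtractf[symmetric] field_simps)
  also have "\<dots> \<le> (\<Sum>p\<in>primes_le x. \<Sum>j=1..x. ln (real p) * real (x div p^j))"
  proof (intro sum_mono)
    fix p
    assume p: "p \<in> primes_le x"
    have "ln (real p) * (real x / real p - 1) \<le> ln (real p) * real (x div p^1)"
      using real_div_nat_ge[of x p] p by (intro mult_left_mono) (auto simp: ln_prime_nonneg)
    also have "\<dots> \<le> (\<Sum>j=1..x. ln (real p) * real (x div p^j))"
      using assms p by (intro member_le_sum) (auto intro!: mult_nonneg_nonneg ln_prime_nonneg)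
    finally show "ln (real p) * (real x / real p - 1) \<le> \<dots>" .
  qed
  also have "\<dots> = ln (fact x)"
    by (rule ln_fact_eq_sum_prime_powers[symmetric]) simp
  also have "\<dots> \<le> real x * ln (real x)"
    by (rule ln_fact_le)
  finally have "real x * primes_M x \<le> real x * (ln (real x) + 4 * ln 2)"
    using primes_theta_le[of x] by (simp add: algebra_simps)
  then show ?thesis
    using assms by simp
qed

lemma primes_M_ge:
  assumes "1 \<le> x"
  shows "ln (real x) - 1 - 4 * (\<Sum>k. (ln (real k))^2 / (real k)^2) \<le> primes_M x"
proof -
  have "real x * ln (real x) - real x \<le> ln (fact x)"
    by (rule ln_fact_ge)
  also have "\<dots> = (\<Sum>p\<in>primes_le x. \<Sum>j=1..x. ln (real p) * real (x div p^j))"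
    by (rule ln_fact_eq_sum_prime_powers) simp
  also have "\<dots> \<le> (\<Sum>p\<in>primes_le x. ln (real p) * (real x / real p + real x * (2 / (real p)^2)))"
  proof (intro sum_mono)
    fix p
    assume p: "p \<in> primes_le x"
    then have p2: "2 \<le> p"
      by (simp add: prime_ge_2_nat)
    have "{1..x} = insert 1 {2..x}"
      using assms by auto
    have "(\<Sum>j=1..x. real (x div p^j)) \<le> (\<Sum>j=1..x. real x * (1 / real p)^j)"
      using real_div_nat_le[of x "p^_"] by (intro sum_mono) (simp add: power_divide)
    also have "\<dots> = real x / real p + real x * (\<Sum>j=2..x. (1 / real p)^j)"
      using \<open>{1..x} = insert 1 {2..x}\<close> by (simp add: sum_distrib_left)
    also have "\<dots> \<le> real x / real p + real x * (2 / (real p)^2)"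
      using p2 by (intro add_left_mono mult_left_mono sum_inverse_powers_from_2_le) auto
    finally show "(\<Sum>j=1..x. ln (real p) * real (x div p^j)) \<le> ln (real p) * (\<dots>)"
      using p by (simp add: sum_distrib_left[symmetric] mult_left_mono ln_prime_nonneg)
  qed
  also have "\<dots> = real x * primes_M x + 2 * real x * (\<Sum>p\<in>primes_le x. ln (real p) / (real p)^2)"
    unfolding primes_M_def by (simp add: sum_distrib_left sum.distrib algebra_simps)
  also have "\<dots> \<le> real x * primes_M x + 2 * real x * (2 * (\<Sum>k. (ln (real k))^2 / (real k)^2))"
    by (intro add_left_mono mult_left_mono sum_ln_prime_over_sq_le) auto
  finally have "real x * (ln (real x) - 1 - 4 * (\<Sum>k. (ln (real k))^2 / (real k)^2)) \<le> real x * primes_M x"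
    by (simp add: algebra_simps)
  then show ?thesis
    using assms by simp
qed

lemma primes_M_minus_ln_bounded: "\<exists>C. \<forall>x. \<bar>primes_M x - ln (real x)\<bar> \<le> C"
proof (intro exI allI)
  fix x
  show "\<bar>primes_M x - ln (real x)\<bar> \<le> 4 * ln 2 + 1 + 4 * (\<Sum>k. (ln (real k))^2 / (real k)^2)"
  proof (cases "x = 0")
    case True
    then show ?thesis
      using suminf_nonneg[OF summable_ln_sq_over_sq] by (simp add: primes_M_def)
  next
    case False
    then have "1 \<le> x"
      by simp
    moreover have "0 \<le> ln (2::real)" "0 \<le> (\<Sum>k. (ln (real k))^2 / (real k)^2)"
      by (simp_all add: suminf_nonneg summable_ln_sq_over_sq)
    ultimately show ?thesis
      using primes_M_le[of x] primes_M_ge[of x] unfolding abs_le_iff by linarith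
  qed
qed

definition primes_M2 :: "nat \<Rightarrow> real" where
  "primes_M2 x = (\<Sum>p\<in>primes_le x. (ln (real p))^2 / real p)"

lemma primes_M2_by_parts:
  "primes_M2 m = ln (real m) * primes_M m - (\<Sum>k<m. primes_M k * (ln (real (Suc k)) - ln (real k)))"
proof (induction m)
  case (Suc m)
  then show ?case
    by (simp add: primes_M2_def primes_M_def primes_le_Suc power2_eq_square algebra_simps
        del: of_nat_Suc)
qed (simp add: primes_M2_def)

lemma sum_ln_mult_ln_diff_le: "(\<Sum>k<m. ln (real k) * (ln (real (Suc k)) - ln (real k))) \<le> (ln (real m))^2 / 2"
proof (induction m)
  case (Suc m)
  have "ln (real m) * (ln (real (Suc m)) - ln (real m))
      = (ln (real (Suc m)))^2 / 2 - (ln (real m))^2 / 2 - (ln (real (Suc m)) - ln (real m))^2 / 2"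
    by (simp add: power2_eq_square field_simps)
  moreover have "0 \<le> (ln (real (Suc m)) - ln (real m))^2"
    by simp
  ultimately show ?case
    using Suc.IH by (simp only: sum.lessThan_Suc)
qed simp

text \<open>The squared increments \<open>(ln (k + 1) - ln k)\<^sup>2 \<le> 1 / k\<^sup>2\<close> are bounded by the
  telescoping \<open>2 * (1 / k - 1 / (k + 1))\<close>.\<close>
lemma sum_ln_mult_ln_diff_ge:
  "(ln (real (Suc m)))^2 / 2 - 1 + 1 / real (Suc m)
    \<le> (\<Sum>k<Suc m. ln (real k) * (ln (real (Suc k)) - ln (real k)))"
proof (induction m)
  case (Suc m)
  define a where "a = ln (real (Suc (Suc m))) - ln (real (Suc m))"
  have "ln (real (Suc (Suc m)) / real (Suc m)) \<le> real (Suc (Suc m)) / real (Suc m) - 1"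
    by (intro ln_le_minus_one) auto
  then have "a \<le> 1 / real (Suc m)"
    unfolding a_def by (simp add: ln_div field_simps del: of_nat_Suc)
  moreover have "0 \<le> a"
    unfolding a_def by simp
  ultimately have "a^2 \<le> (1 / real (Suc m))^2"
    by (intro power_mono)
  also have "\<dots> \<le> 2 * (1 / real (Suc m) - 1 / real (Suc (Suc m)))"
    by (simp add: field_simps power2_eq_square del: of_nat_Suc) (simp add: algebra_simps)
  finally have "a^2 / 2 \<le> 1 / real (Suc m) - 1 / real (Suc (Suc m))"
    by simp
  moreover have "ln (real (Suc m)) * a = (ln (real (Suc (Suc m))))^2 / 2 - (ln (real (Suc m)))^2 / 2 - a^2 / 2"
    unfolding a_def by (simp add: power2_eq_square field_simps)
  ultimately show ?case
    using Suc.IH by (simp add: a_def del: of_nat_Suc)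
qed simp

lemma sum_ln_mult_ln_diff_close:
  assumes "1 \<le> m"
  shows "\<bar>(ln (real m))^2 / 2 - (\<Sum>k<m. ln (real k) * (ln (real (Suc k)) - ln (real k)))\<bar> \<le> 1"
proof -
  have "(ln (real m))^2 / 2 - 1 + 1 / real m
      \<le> (\<Sum>k<m. ln (real k) * (ln (real (Suc k)) - ln (real k)))"
    using sum_ln_mult_ln_diff_ge[of "m - 1"] assms by simp
  moreover have "0 \<le> 1 / real m"
    by simp
  ultimately show ?thesis
    using sum_ln_mult_ln_diff_le[of m] unfolding abs_le_iff by linarith
qed

lemma primes_M2_asymp_bound: "\<exists>C. \<forall>m\<ge>1. \<bar>primes_M2 m - (ln (real m))^2 / 2\<bar> \<le> C * (ln (real m) + 1)"
proof -
  obtain B where B: "\<And>x. \<bar>primes_M x - ln (real x)\<bar> \<le> B"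
    using primes_M_minus_ln_bounded by blast
  have "\<bar>primes_M2 m - (ln (real m))^2 / 2\<bar> \<le> (2 * B + 1) * (ln (real m) + 1)" if "1 \<le> m" for m
  proof -
    define d where "d k = ln (real (Suc k)) - ln (real k)" for k
    define T where "T = (\<Sum>k<m. ln (real k) * d k)"
    define R where "R = (\<Sum>k<m. (primes_M k - ln (real k)) * d k)"
    have d_nonneg: "0 \<le> d k" for k
      by (cases "k = 0") (auto simp: d_def)
    have "\<bar>R\<bar> \<le> (\<Sum>k<m. B * d k)"
      unfolding R_def
      by (rule order.trans[OF sum_abs sum_mono]) (simp add: abs_mult d_nonneg B mult_right_mono)
    also have "\<dots> = B * ln (real m)"
      using sum_lessThan_telescope[of "\<lambda>k. ln (real k)" m]
      by (simp add: d_def sum_distrib_left[symmetric] del: of_nat_Suc)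
    finally have R: "\<bar>R\<bar> \<le> B * ln (real m)" .
    have "0 \<le> B" "0 \<le> ln (real m)"
      using B[of 0] that by auto
    have "\<bar>ln (real m) * (primes_M m - ln (real m))\<bar> \<le> B * ln (real m)"
      using mult_right_mono[OF B[of m] \<open>0 \<le> ln (real m)\<close>] \<open>0 \<le> ln (real m)\<close>
      by (simp add: abs_mult mult.commute)
    moreover have "\<bar>(ln (real m))^2 / 2 - T\<bar> \<le> 1"
      using sum_ln_mult_ln_diff_close[OF that] by (simp add: T_def d_def)
    moreover have "primes_M2 m - (ln (real m))^2 / 2
        = ln (real m) * (primes_M m - ln (real m)) + ((ln (real m))^2 / 2 - T) - R"
      by (simp add: primes_M2_by_parts T_def R_def d_def sum.distrib[symmetric] algebra_simps
          power2_eq_square)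
    ultimately have "\<bar>primes_M2 m - (ln (real m))^2 / 2\<bar> \<le> 2 * B * ln (real m) + 1"
      using R by linarith
    also have "\<dots> \<le> (2 * B + 1) * (ln (real m) + 1)"
      using \<open>0 \<le> B\<close> \<open>0 \<le> ln (real m)\<close> by (simp add: algebra_simps)
    finally show ?thesis .
  qed
  then show ?thesis
    by blast
qed

section \<open>Means and variances under a uniform distribution\<close>

definition unif_mean :: "'a set \<Rightarrow> ('a \<Rightarrow> real) \<Rightarrow> real" where
  "unif_mean A f = (\<Sum>x\<in>A. f x) / real (card A)"

definition unif_var :: "'a set \<Rightarrow> ('a \<Rightarrow> real) \<Rightarrow> real" where
  "unif_var A f = unif_mean A (\<lambda>x. (f x - unif_mean A f)^2)"

definition unif_cov :: "'a set \<Rightarrow> ('a \<Rightarrow> real) \<Rightarrow> ('a \<Rightarrow> real) \<Rightarrow> real" where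
  "unif_cov A f g = unif_mean A (\<lambda>x. f x * g x) - unif_mean A f * unif_mean A g"

lemma variance_pmf_of_set:
  "finite A \<Longrightarrow> A \<noteq> {} \<Longrightarrow> measure_pmf.variance (pmf_of_set A) f = unif_var A f"
  by (simp add: unif_var_def unif_mean_def integral_pmf_of_set)

lemma unif_mean_add: "unif_mean A (\<lambda>x. f x + g x) = unif_mean A f + unif_mean A g"
  by (simp add: unif_mean_def sum.distrib add_divide_distrib)

lemma unif_mean_diff: "unif_mean A (\<lambda>x. f x - g x) = unif_mean A f - unif_mean A g"
  by (simp add: unif_mean_def sum_subtractf diff_divide_distrib)

lemma unif_mean_cmult: "unif_mean A (\<lambda>x. c * f x) = c * unif_mean A f"
  by (simp add: unif_mean_def sum_distrib_left[symmetric])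

lemma unif_mean_const: "finite A \<Longrightarrow> A \<noteq> {} \<Longrightarrow> unif_mean A (\<lambda>_. c) = c"
  by (simp add: unif_mean_def)

lemma unif_mean_sum: "unif_mean A (\<lambda>x. \<Sum>i\<in>I. f i x) = (\<Sum>i\<in>I. unif_mean A (f i))"
  by (simp add: unif_mean_def sum.swap[of _ I] sum_divide_distrib)

lemma unif_mean_mono: "(\<And>x. x \<in> A \<Longrightarrow> f x \<le> g x) \<Longrightarrow> unif_mean A f \<le> unif_mean A g"
  unfolding unif_mean_def by (intro divide_right_mono sum_mono) auto

lemma unif_mean_nonneg: "(\<And>x. x \<in> A \<Longrightarrow> 0 \<le> f x) \<Longrightarrow> 0 \<le> unif_mean A f"
  unfolding unif_mean_def by (intro divide_nonneg_nonneg sum_nonneg) auto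

lemma unif_mean_cong: "(\<And>x. x \<in> A \<Longrightarrow> f x = g x) \<Longrightarrow> unif_mean A f = unif_mean A g"
  unfolding unif_mean_def by (metis sum.cong)

lemma unif_var_cong: "(\<And>x. x \<in> A \<Longrightarrow> f x = g x) \<Longrightarrow> unif_var A f = unif_var A g"
  unfolding unif_var_def by (metis (no_types, lifting) unif_mean_cong)

lemma unif_var_nonneg: "0 \<le> unif_var A f"
  unfolding unif_var_def by (intro unif_mean_nonneg) simp

lemma unif_mean_square_expand:
  assumes "finite A" "A \<noteq> {}"
  shows "unif_mean A (\<lambda>x. (f x - c)^2) = unif_mean A (\<lambda>x. (f x)^2) - 2 * c * unif_mean A f + c^2"
proof -
  have "unif_mean A (\<lambda>x. (f x - c)^2) = unif_mean A (\<lambda>x. (f x)^2 + (- 2 * c) * f x + c^2)"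
    by (intro unif_mean_cong) (simp add: power2_eq_square algebra_simps)
  also have "\<dots> = unif_mean A (\<lambda>x. (f x)^2) + (- 2 * c) * unif_mean A f + c^2"
    by (simp only: unif_mean_add unif_mean_cmult unif_mean_const[OF assms])
  finally show ?thesis
    by simp
qed

lemma unif_var_eq:
  "finite A \<Longrightarrow> A \<noteq> {} \<Longrightarrow> unif_var A f = unif_mean A (\<lambda>x. (f x)^2) - (unif_mean A f)^2"
  unfolding unif_var_def by (subst unif_mean_square_expand) (simp_all add: power2_eq_square)

lemma unif_var_le_mean_sq_dist:
  assumes "finite A" "A \<noteq> {}"
  shows "unif_var A f \<le> unif_mean A (\<lambda>x. (f x - c)^2)"
proof -
  have "unif_mean A (\<lambda>x. (f x - c)^2) = unif_var A f + (unif_mean A f - c)^2"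
    by (simp only: unif_var_eq[OF assms] unif_mean_square_expand[OF assms])
       (simp add: power2_eq_square algebra_simps)
  then show ?thesis
    by simp
qed

lemma unif_var_sum:
  assumes "finite A" "A \<noteq> {}"
  shows "unif_var A (\<lambda>x. \<Sum>i\<in>I. c i * f i x)
    = (\<Sum>i\<in>I. \<Sum>j\<in>I. c i * c j * unif_cov A (f i) (f j))"
proof -
  have "unif_mean A (\<lambda>x. (\<Sum>i\<in>I. c i * f i x)^2)
      = (\<Sum>i\<in>I. \<Sum>j\<in>I. c i * c j * unif_mean A (\<lambda>x. f i x * f j x))"
    by (simp add: power2_eq_square sum_product unif_mean_sum mult.assoc mult.left_commute
        flip: unif_mean_cmult)
  moreover have "(unif_mean A (\<lambda>x. \<Sum>i\<in>I. c i * f i x))^2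
      = (\<Sum>i\<in>I. \<Sum>j\<in>I. c i * c j * (unif_mean A (f i) * unif_mean A (f j)))"
    by (simp add: power2_eq_square sum_product unif_mean_sum unif_mean_cmult algebra_simps)
  ultimately show ?thesis
    using assms by (simp add: unif_var_eq unif_cov_def sum_subtractf[symmetric] algebra_simps)
qed

lemma sqrt_unif_var_eq_L2_set:
  "sqrt (unif_var A f) = L2_set (\<lambda>x. f x - unif_mean A f) A / sqrt (real (card A))"
  by (simp add: unif_var_def unif_mean_def[of A "\<lambda>x. (f x - _)^2"] L2_set_def real_sqrt_divide)

lemma sqrt_unif_var_diff_le:
  "sqrt (unif_var A (\<lambda>x. f x - g x)) \<le> sqrt (unif_var A f) + sqrt (unif_var A g)"
proof -
  have "L2_set (\<lambda>x. (f x - g x) - unif_mean A (\<lambda>x. f x - g x)) A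
      = L2_set (\<lambda>x. (f x - unif_mean A f) + - (g x - unif_mean A g)) A"
    by (simp add: unif_mean_diff algebra_simps)
  also have "\<dots> \<le> L2_set (\<lambda>x. f x - unif_mean A f) A + L2_set (\<lambda>x. - (g x - unif_mean A g)) A"
    by (rule L2_set_triangle_ineq)
  also have "L2_set (\<lambda>x. - (g x - unif_mean A g)) A = L2_set (\<lambda>x. g x - unif_mean A g) A"
    by (simp add: L2_set_def power2_commute)
  finally show ?thesis
    by (simp add: sqrt_unif_var_eq_L2_set add_divide_distrib[symmetric] divide_right_mono)
qed

lemma sqrt_unif_var_diff_close:
  "\<bar>sqrt (unif_var A (\<lambda>x. f x - g x)) - sqrt (unif_var A g)\<bar> \<le> sqrt (unif_var A f)"
  using sqrt_unif_var_diff_le[of A f g] sqrt_unif_var_diff_le[of A f "\<lambda>x. f x - g x"]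
  by simp

section \<open>Divisibility frequencies in \<open>{1..n}\<close>\<close>

lemma unif_mean_dvd:
  "0 < d \<Longrightarrow> unif_mean {1..n} (\<lambda>k. of_bool (d dvd k)) = real (n div d) / real n"
  using card_multiples_atLeastAtMost[of d n] by (simp add: unif_mean_def)

lemma unif_mean_dvd_le: "unif_mean {1..n} (\<lambda>k. of_bool (d dvd k)) \<le> 1 / real d"
proof (cases "d = 0 \<or> n = 0")
  case False
  then have "real (n div d) / real n \<le> (real n / real d) / real n"
    by (intro divide_right_mono real_div_nat_le) auto
  with False show ?thesis
    using unif_mean_dvd[of d n] by simp
qed (auto simp: unif_mean_def)

lemma unif_mean_dvd_ge:
  assumes "0 < d" "1 \<le> n"
  shows "1 / real d - 1 / real n \<le> unif_mean {1..n} (\<lambda>k. of_bool (d dvd k))"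
proof -
  have "1 / real d - 1 / real n = (real n / real d - 1) / real n"
    using assms by (simp add: field_simps)
  also have "\<dots> \<le> real (n div d) / real n"
    by (intro divide_right_mono real_div_nat_ge) auto
  finally show ?thesis
    using assms unif_mean_dvd[of d n] by simp
qed

lemma of_bool_dvd_mult_coprime:
  fixes a b k :: nat
  assumes "coprime a b"
  shows "of_bool (a dvd k) * of_bool (b dvd k) = (of_bool (a * b dvd k) :: real)"
proof -
  have "a dvd k \<and> b dvd k \<longleftrightarrow> a * b dvd k"
    using assms by (auto intro: divides_mult dvd_mult_left dvd_mult_right)
  then show ?thesis
    by (simp only: of_bool_conj[symmetric])
qed

lemma unif_cov_dvd_self:
  assumes "0 < d" "d \<le> n"
  shows "\<bar>unif_cov {1..n} (\<lambda>k. of_bool (d dvd k)) (\<lambda>k. of_bool (d dvd k)) - 1 / real d\<bar>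
    \<le> 1 / real n + 1 / (real d)^2"
proof -
  define a where "a = unif_mean {1..n} (\<lambda>k. of_bool (d dvd k))"
  have "1 \<le> n"
    using assms by linarith
  then have a: "1 / real d - 1 / real n \<le> a" "a \<le> 1 / real d"
    using unif_mean_dvd_ge[OF assms(1)] unif_mean_dvd_le[of n d] by (simp_all add: a_def)
  moreover have "1 / real n \<le> 1 / real d"
    using assms by (simp add: frac_le)
  ultimately have "0 \<le> a"
    by linarith
  then have "0 \<le> a * a" "a * a \<le> 1 / real d * (1 / real d)"
    using a by (simp, intro mult_mono) auto
  moreover have "unif_cov {1..n} (\<lambda>k. of_bool (d dvd k)) (\<lambda>k. of_bool (d dvd k)) = a - a * a"
    by (simp add: unif_cov_def a_def flip: of_bool_conj)
  moreover have "1 / (real d)^2 = 1 / real d * (1 / real d)"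
    by (simp add: power2_eq_square)
  ultimately show ?thesis
    using a unfolding abs_le_iff by linarith
qed

lemma unif_cov_dvd_coprime:
  assumes "coprime d e" "2 \<le> d" "2 \<le> e" "d \<le> n" "e \<le> n"
  shows "\<bar>unif_cov {1..n} (\<lambda>k. of_bool (d dvd k)) (\<lambda>k. of_bool (e dvd k))\<bar> \<le> 1 / real n"
proof -
  define a where "a c = unif_mean {1..n} (\<lambda>k. of_bool (c dvd k))" for c
  define x y t where "x = 1 / real d" and "y = 1 / real e" and "t = 1 / real n"
  have "1 \<le> n"
    using assms by linarith
  have xy: "x \<le> 1/2" "y \<le> 1/2" "0 \<le> t" "t \<le> x" "t \<le> y"
    using assms unfolding x_def y_def t_def by (auto simp: field_simps)
  have a_bounds: "1 / real c - t \<le> a c" "a c \<le> 1 / real c" if "0 < c" for c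
    using unif_mean_dvd_ge[OF that \<open>1 \<le> n\<close>] unif_mean_dvd_le[of n c]
    by (simp_all add: a_def t_def)
  have ad: "x - t \<le> a d" "a d \<le> x" and ae: "y - t \<le> a e" "a e \<le> y"
    using a_bounds[of d] a_bounds[of e] assms by (simp_all add: x_def y_def)
  have "unif_cov {1..n} (\<lambda>k. of_bool (d dvd k)) (\<lambda>k. of_bool (e dvd k)) = a (d * e) - a d * a e"
    using assms(1) by (simp add: unif_cov_def a_def of_bool_dvd_mult_coprime)
  moreover have "x * y - t \<le> a (d * e)" "a (d * e) \<le> x * y"
    using a_bounds[of "d * e"] assms by (simp_all add: x_def y_def)
  moreover have "a d * a e \<le> x * y"
    using ad ae xy by (intro mult_mono) auto
  moreover have "x * y - t \<le> (x - t) * (y - t)"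
  proof -
    have "t * (x + y) \<le> t * 1"
      using xy by (intro mult_left_mono) auto
    moreover have "0 \<le> t * t"
      by simp
    moreover have "(x - t) * (y - t) = x * y - t * (x + y) + t * t"
      by (simp add: algebra_simps)
    ultimately show ?thesis
      by linarith
  qed
  moreover have "(x - t) * (y - t) \<le> a d * a e"
    using ad ae xy by (intro mult_mono) auto
  ultimately show ?thesis
    unfolding abs_le_iff by (simp add: t_def)
qed

lemma unif_cov_dvd_primes:
  assumes "prime p" "prime q" "p \<le> n" "q \<le> n"
  shows "\<bar>unif_cov {1..n} (\<lambda>k. of_bool (p dvd k)) (\<lambda>k. of_bool (q dvd k))
      - (if p = q then 1 / real p else 0)\<bar>
    \<le> 1 / real n + (if p = q then 1 / (real p)^2 else 0)"
  using assms unif_cov_dvd_self[of p n] unif_cov_dvd_coprime[of p q n]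
  by (auto simp: primes_coprime prime_gt_0_nat prime_ge_2_nat)

lemma unif_mean_dvd_prime_powers_le:
  assumes "prime p" "prime q"
  shows "unif_mean {1..n} (\<lambda>k. of_bool (p^j dvd k) * of_bool (q^i dvd k))
    \<le> (1 / real p)^j * (1 / real q)^i + (if p = q then (1 / sqrt (real p))^(j + i) else 0)"
proof (cases "p = q")
  case False
  then have "coprime (p^j) (q^i)"
    using assms by (simp add: primes_coprime)
  then have "unif_mean {1..n} (\<lambda>k. of_bool (p^j dvd k) * of_bool (q^i dvd k))
      = unif_mean {1..n} (\<lambda>k. of_bool (p^j * q^i dvd k))"
    by (simp add: of_bool_dvd_mult_coprime)
  also have "\<dots> \<le> (1 / real p)^j * (1 / real q)^i"
    using unif_mean_dvd_le[of n "p^j * q^i"] by (simp add: power_divide)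
  finally show ?thesis
    using False by simp
next
  case True
  define v where "v = unif_mean {1..n} (\<lambda>k. of_bool (p^j dvd k) * of_bool (p^i dvd k))"
  have "0 \<le> v"
    unfolding v_def by (intro unif_mean_nonneg) simp
  have "v \<le> unif_mean {1..n} (\<lambda>k. of_bool (p^l dvd k))" if "l = i \<or> l = j" for l
    unfolding v_def using that by (intro unif_mean_mono) auto
  then have "v \<le> (1 / real p)^j" "v \<le> (1 / real p)^i"
    using unif_mean_dvd_le[of n "p^_"] by (auto simp: power_divide intro: order.trans)
  then have "v * v \<le> (1 / real p)^j * (1 / real p)^i"
    using \<open>0 \<le> v\<close> by (intro mult_mono) auto
  then have "v \<le> sqrt ((1 / real p)^j * (1 / real p)^i)"
    using \<open>0 \<le> v\<close> by (intro real_le_rsqrt) (simp add: power2_eq_square)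
  also have "\<dots> = (1 / sqrt (real p))^(j + i)"
    by (simp add: real_sqrt_mult real_sqrt_power real_sqrt_divide power_add)
  finally show ?thesis
    using True by (simp add: v_def add_increasing)
qed

section \<open>Splitting \<open>ln k\<close> by the size of the prime divisors\<close>

definition ln_rad_upto :: "nat \<Rightarrow> nat \<Rightarrow> real" where
  "ln_rad_upto m k = (\<Sum>p\<in>primes_le m. ln (real p) * of_bool (p dvd k))"

definition ln_rad_between :: "nat \<Rightarrow> nat \<Rightarrow> nat \<Rightarrow> real" where
  "ln_rad_between m n k = (\<Sum>p\<in>primes_le n - primes_le m. ln (real p) * of_bool (p dvd k))"

definition ln_power_excess :: "nat \<Rightarrow> nat \<Rightarrow> real" where
  "ln_power_excess n k = (\<Sum>p\<in>primes_le n. \<Sum>j=2..n. ln (real p) * of_bool (p^j dvd k))"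

lemma ln_Utilde:
  assumes "1 \<le> k"
  shows "ln (real (Utilde n m k)) = ln_rad_between m n k"
proof -
  have primes_between: "{p. prime p \<and> m < p \<and> p \<le> n} = primes_le n - primes_le m"
    by auto
  have "ln (real (Utilde n m k))
      = (\<Sum>p\<in>primes_le n - primes_le m. ln (real p ^ (if 1 \<le> multiplicity p k then 1 else 0)))"
    unfolding Utilde_def primes_between of_nat_prod of_nat_power
    by (subst ln_prod) (auto simp: prime_gt_0_nat)
  also have "\<dots> = ln_rad_between m n k"
    unfolding ln_rad_between_def
  proof (intro sum.cong refl)
    fix p
    assume "p \<in> primes_le n - primes_le m"
    then have "1 \<le> multiplicity p k \<longleftrightarrow> p dvd k"
      using assms power_dvd_iff_le_multiplicity[of k p 1] by (auto dest: prime_gt_1_nat)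
    then show "ln (real p ^ (if 1 \<le> multiplicity p k then 1 else 0)) = ln (real p) * of_bool (p dvd k)"
      by simp
  qed
  finally show ?thesis .
qed

lemma ln_eq_rad_parts_plus_power_excess:
  assumes "1 \<le> k" "k \<le> n" "m \<le> n"
  shows "ln (real k) = ln_rad_upto m k + ln_rad_between m n k + ln_power_excess n k"
proof -
  have "{1..n} = insert 1 {2..n}"
    using assms by auto
  then have "ln (real k) = (\<Sum>p\<in>primes_le n. ln (real p) * of_bool (p dvd k)) + ln_power_excess n k"
    using ln_eq_sum_prime_power_divisors[OF assms(1,2)]
    by (simp add: ln_power_excess_def sum.distrib del: sum_mult_of_bool_eq)
  also have "(\<Sum>p\<in>primes_le n. ln (real p) * of_bool (p dvd k)) = ln_rad_upto m k + ln_rad_between m n k"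
    using assms(3) unfolding ln_rad_upto_def ln_rad_between_def
    by (subst sum.subset_diff[of "primes_le m"]) (auto simp del: sum_mult_of_bool_eq)
  finally show ?thesis .
qed

section \<open>Second moments of the parts\<close>

lemma unif_mean_ln_minus_ln_sq_le:
  assumes "1 \<le> n"
  shows "unif_mean {1..n} (\<lambda>k. (ln (real k) - ln (real n))^2) \<le> 32"
proof -
  have "unif_mean {1..n} (\<lambda>k. (ln (real k) - ln (real n))^2)
      \<le> unif_mean {1..n} (\<lambda>k. 16 * sqrt (real n) * (1 / sqrt (real k)))"
  proof (rule unif_mean_mono)
    fix k
    assume k: "k \<in> {1..n}"
    have "(ln (real k) - ln (real n))^2 = (ln (real n / real k))^2"
      using k by (simp add: ln_div power2_commute)
    also have "\<dots> \<le> 16 * sqrt (real n / real k)"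
      using k by (intro ln_sq_le_16_sqrt) auto
    finally show "(ln (real k) - ln (real n))^2 \<le> 16 * sqrt (real n) * (1 / sqrt (real k))"
      by (simp add: real_sqrt_divide)
  qed
  also have "\<dots> = 16 * sqrt (real n) * (\<Sum>k=1..n. 1 / sqrt (real k)) / real n"
    by (simp add: unif_mean_def sum_distrib_left)
  also have "\<dots> \<le> 16 * sqrt (real n) * (2 * sqrt (real n)) / real n"
    by (intro divide_right_mono mult_left_mono sum_inverse_sqrt_le) auto
  also have "\<dots> = 32"
    using assms by simp
  finally show ?thesis .
qed

lemma sum_inverse_sqrt_powers_from_2_le:
  assumes "2 \<le> p"
  shows "(\<Sum>j=2..N. (1 / sqrt (real p))^j) \<le> 4 / real p"
proof -
  define s where "s = 1 / sqrt (real p)"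
  have "(4/3)^2 \<le> real p"
    using assms by (simp add: power2_eq_square)
  then have "4/3 \<le> sqrt (real p)"
    by (intro real_le_rsqrt)
  then have s: "0 \<le> s" "s \<le> 3/4"
    unfolding s_def using assms by (auto simp: field_simps)
  then have "(\<Sum>j=2..N. s^j) \<le> s^2 / (1 - s)"
    by (intro sum_power_from_2_le) auto
  also have "\<dots> \<le> s^2 / (1/4)"
    using s by (intro divide_left_mono) auto
  also have "s^2 = 1 / real p"
    unfolding s_def using assms by (simp add: power_divide)
  finally show ?thesis
    by (simp add: s_def)
qed

lemma sum_ln_prime_geometric_tails_le:
  "(\<Sum>p\<in>primes_le x. \<Sum>j=2..N. ln (real p) * (1 / real p)^j) \<le> 4 * (\<Sum>k. (ln (real k))^2 / (real k)^2)"
proof -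
  have "(\<Sum>p\<in>primes_le x. \<Sum>j=2..N. ln (real p) * (1 / real p)^j)
      \<le> (\<Sum>p\<in>primes_le x. ln (real p) * (2 / (real p)^2))"
    unfolding sum_distrib_left[symmetric]
    by (intro sum_mono mult_left_mono sum_inverse_powers_from_2_le)
       (auto simp: ln_prime_nonneg prime_ge_2_nat)
  also have "\<dots> = 2 * (\<Sum>p\<in>primes_le x. ln (real p) / (real p)^2)"
    by (simp add: sum_distrib_left mult.commute)
  also have "\<dots> \<le> 4 * (\<Sum>k. (ln (real k))^2 / (real k)^2)"
    using sum_ln_prime_over_sq_le[of x] by simp
  finally show ?thesis .
qed

lemma sum_ln_sq_prime_sqrt_geometric_tails_le:
  "(\<Sum>p\<in>primes_le x. (ln (real p))^2 * (\<Sum>j=2..N. (1 / sqrt (real p))^j)^2)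
    \<le> 16 * (\<Sum>k. (ln (real k))^2 / (real k)^2)"
proof -
  have "(\<Sum>p\<in>primes_le x. (ln (real p))^2 * (\<Sum>j=2..N. (1 / sqrt (real p))^j)^2)
      \<le> (\<Sum>p\<in>primes_le x. (ln (real p))^2 * (4 / real p)^2)"
    by (intro sum_mono mult_left_mono power_mono sum_inverse_sqrt_powers_from_2_le sum_nonneg)
       (auto simp: prime_ge_2_nat)
  also have "\<dots> = 16 * (\<Sum>p\<in>primes_le x. (ln (real p))^2 / (real p)^2)"
    by (simp add: sum_distrib_left power_divide mult.commute)
  also have "\<dots> \<le> 16 * (\<Sum>k. (ln (real k))^2 / (real k)^2)"
    by (simp add: sum_ln_sq_over_sq_le_suminf)
  finally show ?thesis .
qed

text \<open>Expanding the square, pairs of distinct primes give the square of a convergent series;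
  for a single prime the frequency of \<open>p\<^sup>i \<bar> k \<and> p\<^sup>j \<bar> k\<close> is at most the geometric mean of
  \<open>1 / p\<^sup>i\<close> and \<open>1 / p\<^sup>j\<close>.\<close>
lemma unif_mean_ln_power_excess_sq_bounded:
  "\<exists>C. \<forall>n. unif_mean {1..n} (\<lambda>k. (ln_power_excess n k)^2) \<le> C"
proof (intro exI allI)
  fix n
  define G where "G = (\<Sum>k. (ln (real k))^2 / (real k)^2)"
  define P J where "P = primes_le n" and "J = {2..n}"
  define s where "s p = 1 / sqrt (real p)" for p :: nat
  define M where "M = (\<Sum>p\<in>P. \<Sum>j\<in>J. ln (real p) * (1 / real p)^j)"
  have "unif_mean {1..n} (\<lambda>k. (ln_power_excess n k)^2)
      = (\<Sum>p\<in>P. \<Sum>q\<in>P. \<Sum>j\<in>J. \<Sum>i\<in>J. ln (real p) * ln (real q)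
          * unif_mean {1..n} (\<lambda>k. of_bool (p^j dvd k) * of_bool (q^i dvd k)))"
    unfolding ln_power_excess_def power2_eq_square sum_product P_def J_def
    by (simp add: unif_mean_sum mult_ac flip: unif_mean_cmult)
  also have "\<dots> \<le> (\<Sum>p\<in>P. \<Sum>q\<in>P. \<Sum>j\<in>J. \<Sum>i\<in>J. ln (real p) * ln (real q)
          * ((1 / real p)^j * (1 / real q)^i + (if p = q then s p ^ j * s p ^ i else 0)))"
    unfolding P_def s_def
    by (intro sum_mono mult_left_mono[OF unif_mean_dvd_prime_powers_le[THEN order.trans]])
       (auto simp: ln_prime_nonneg power_add)
  also have "\<dots> = M * M + (\<Sum>p\<in>P. (ln (real p))^2 * (\<Sum>j\<in>J. s p ^ j)^2)"
  proof -
    have "(\<Sum>q\<in>P. \<Sum>j\<in>J. \<Sum>i\<in>J. ln (real p) * ln (real q) * (if p = q then s p ^ j * s p ^ i else 0))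
        = (\<Sum>q\<in>P. if q = p then (ln (real p))^2 * (\<Sum>j\<in>J. s p ^ j)^2 else 0)" for p
      by (intro sum.cong refl)
         (auto simp: power2_eq_square sum_product sum_distrib_left mult_ac intro!: sum.cong)
    then show ?thesis
      unfolding M_def by (simp add: distrib_left sum.distrib sum_product mult_ac P_def)
  qed
  also have "\<dots> \<le> (4 * G) * (4 * G) + 16 * G"
  proof (rule add_mono)
    have "0 \<le> M" "M \<le> 4 * G"
      using sum_ln_prime_geometric_tails_le[of n n]
      by (auto simp: M_def P_def J_def G_def ln_prime_nonneg intro!: sum_nonneg)
    then show "M * M \<le> (4 * G) * (4 * G)"
      by (intro mult_mono) auto
    show "(\<Sum>p\<in>P. (ln (real p))^2 * (\<Sum>j\<in>J. s p ^ j)^2) \<le> 16 * G"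
      using sum_ln_sq_prime_sqrt_geometric_tails_le[of n n] by (simp add: P_def J_def s_def G_def)
  qed
  finally show "unif_mean {1..n} (\<lambda>k. (ln_power_excess n k)^2) \<le> (4 * G) * (4 * G) + 16 * G" .
qed

lemma unif_var_ln_rad_upto_minus_primes_M2_le:
  assumes "1 \<le> n" "m \<le> n"
  shows "\<bar>unif_var {1..n} (ln_rad_upto m) - primes_M2 m\<bar>
    \<le> (primes_theta m)^2 / real n + (\<Sum>k. (ln (real k))^2 / (real k)^2)"
proof -
  define P where "P = primes_le m"
  define l where "l p = ln (real p)" for p :: nat
  define d where "d p q = unif_cov {1..n} (\<lambda>k. of_bool (p dvd k)) (\<lambda>k. of_bool (q dvd k))
      - (if p = q then 1 / real p else 0)" for p q :: nat
  have "unif_var {1..n} (ln_rad_upto m) = (\<Sum>p\<in>P. \<Sum>q\<in>P. l p * l q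
      * unif_cov {1..n} (\<lambda>k. of_bool (p dvd k)) (\<lambda>k. of_bool (q dvd k)))"
    unfolding ln_rad_upto_def[abs_def] P_def l_def using assms(1) by (subst unif_var_sum) auto
  moreover have "primes_M2 m = (\<Sum>p\<in>P. \<Sum>q\<in>P. l p * l q * (if p = q then 1 / real p else 0))"
    by (simp add: primes_M2_def P_def l_def power2_eq_square if_distrib[of "\<lambda>x. _ * x"] cong: if_cong)
  ultimately have "\<bar>unif_var {1..n} (ln_rad_upto m) - primes_M2 m\<bar> = \<bar>\<Sum>p\<in>P. \<Sum>q\<in>P. l p * l q * d p q\<bar>"
    by (simp add: d_def sum_subtractf[symmetric] algebra_simps)
  also have "\<dots> \<le> (\<Sum>p\<in>P. \<Sum>q\<in>P. l p * l q * (1 / real n + (if p = q then 1 / (real p)^2 else 0)))"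
  proof (intro order.trans[OF sum_abs sum_mono] order.trans[OF sum_abs sum_mono])
    fix p q
    assume "p \<in> P" "q \<in> P"
    then have "\<bar>d p q\<bar> \<le> 1 / real n + (if p = q then 1 / (real p)^2 else 0)"
      unfolding d_def P_def using assms(2) by (intro unif_cov_dvd_primes) auto
    moreover have "0 \<le> l p * l q"
      using \<open>p \<in> P\<close> \<open>q \<in> P\<close> by (simp add: P_def l_def ln_prime_nonneg)
    ultimately show "\<bar>l p * l q * d p q\<bar> \<le> l p * l q * (1 / real n + (if p = q then 1 / (real p)^2 else 0))"
      unfolding abs_mult[of "l p * l q"] abs_of_nonneg[OF \<open>0 \<le> l p * l q\<close>] by (rule mult_left_mono)
  qed
  also have "\<dots> = (primes_theta m)^2 / real n + (\<Sum>p\<in>P. (l p)^2 / (real p)^2)"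
    by (simp add: primes_theta_def distrib_left sum.distrib sum_product sum_divide_distrib P_def l_def
        power2_eq_square if_distrib[of "\<lambda>x. _ * x"] cong: if_cong)
  also have "(\<Sum>p\<in>P. (l p)^2 / (real p)^2) \<le> (\<Sum>k. (ln (real k))^2 / (real k)^2)"
    unfolding l_def P_def by (rule sum_ln_sq_over_sq_le_suminf) simp
  finally show ?thesis
    by simp
qed

lemma unif_var_ln_rad_upto_close:
  "\<exists>C. \<forall>m n. 1 \<le> m \<longrightarrow> m * m \<le> n \<longrightarrow> \<bar>unif_var {1..n} (ln_rad_upto m) - primes_M2 m\<bar> \<le> C"
proof (intro exI allI impI)
  fix m n :: nat
  assume "1 \<le> m" "m * m \<le> n"
  moreover have "m \<le> m * m"
    using \<open>1 \<le> m\<close> by simp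
  ultimately have "m \<le> n" "1 \<le> n"
    by linarith+
  have "(primes_theta m)^2 \<le> (4 * ln 2 * real m)^2"
    using primes_theta_le[of m] primes_theta_nonneg[of m] by (intro power_mono)
  also have "\<dots> = (4 * ln 2)^2 * real (m * m)"
    by (simp add: power2_eq_square)
  also have "\<dots> \<le> (4 * ln 2)^2 * real n"
    using \<open>m * m \<le> n\<close> by (intro mult_left_mono) (simp_all del: of_nat_mult)
  finally have "(primes_theta m)^2 / real n \<le> (4 * ln 2)^2"
    using \<open>1 \<le> n\<close> by (simp add: divide_le_eq)
  then show "\<bar>unif_var {1..n} (ln_rad_upto m) - primes_M2 m\<bar>
      \<le> (4 * ln 2)^2 + (\<Sum>k. (ln (real k))^2 / (real k)^2)"
    using unif_var_ln_rad_upto_minus_primes_M2_le[OF \<open>1 \<le> n\<close> \<open>m \<le> n\<close>] by linarith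
qed

lemma unif_var_ln_minus_power_excess_bounded:
  "\<exists>C. \<forall>n\<ge>1. unif_var {1..n} (\<lambda>k. ln (real k) - ln_power_excess n k) \<le> C"
proof -
  obtain C where C: "\<And>n. unif_mean {1..n} (\<lambda>k. (ln_power_excess n k)^2) \<le> C"
    using unif_mean_ln_power_excess_sq_bounded by blast
  have "unif_var {1..n} (\<lambda>k. ln (real k) - ln_power_excess n k) \<le> 64 + 2 * C" if "1 \<le> n" for n
  proof -
    have "unif_var {1..n} (\<lambda>k. ln (real k) - ln_power_excess n k)
        \<le> unif_mean {1..n} (\<lambda>k. (ln (real k) - ln_power_excess n k - ln (real n))^2)"
      using that by (intro unif_var_le_mean_sq_dist) auto
    also have "\<dots> \<le> unif_mean {1..n} (\<lambda>k. 2 * (ln (real k) - ln (real n))^2 + 2 * (ln_power_excess n k)^2)"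
    proof (rule unif_mean_mono)
      fix k
      have "0 \<le> (ln (real k) - ln (real n) + ln_power_excess n k)^2"
        by simp
      then show "(ln (real k) - ln_power_excess n k - ln (real n))^2
          \<le> 2 * (ln (real k) - ln (real n))^2 + 2 * (ln_power_excess n k)^2"
        by (simp add: power2_eq_square algebra_simps)
    qed
    also have "\<dots> \<le> 2 * 32 + 2 * C"
      using unif_mean_ln_minus_ln_sq_le[OF that] C[of n]
      by (simp add: unif_mean_add unif_mean_cmult)
    finally show ?thesis
      by simp
  qed
  then show ?thesis
    by blast
qed

lemma sqrt_unif_var_ln_rad_upto_close:
  "\<exists>C. \<forall>m n. 3 \<le> m \<longrightarrow> m * m \<le> n \<longrightarrow>
    \<bar>sqrt (unif_var {1..n} (ln_rad_upto m)) - ln (real m) / sqrt 2\<bar> \<le> C"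
proof -
  obtain A where A: "\<And>m n. 1 \<le> m \<Longrightarrow> m * m \<le> n \<Longrightarrow> \<bar>unif_var {1..n} (ln_rad_upto m) - primes_M2 m\<bar> \<le> A"
    using unif_var_ln_rad_upto_close by blast
  obtain B where B: "\<And>m. 1 \<le> m \<Longrightarrow> \<bar>primes_M2 m - (ln (real m))^2 / 2\<bar> \<le> B * (ln (real m) + 1)"
    using primes_M2_asymp_bound by blast
  have "\<bar>sqrt (unif_var {1..n} (ln_rad_upto m)) - ln (real m) / sqrt 2\<bar> \<le> sqrt 2 * (A + 2 * B)"
    if "3 \<le> m" "m * m \<le> n" for m n
  proof -
    define v L where "v = unif_var {1..n} (ln_rad_upto m)" and "L = ln (real m)"
    have "1 \<le> m"
      using that(1) by simp
    have "exp 1 \<le> real m"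
      using exp_le that(1) by linarith
    then have L: "1 \<le> L"
      unfolding L_def using \<open>1 \<le> m\<close> by (simp add: ln_ge_iff)
    have v: "\<bar>v - primes_M2 m\<bar> \<le> A"
      unfolding v_def using A[OF \<open>1 \<le> m\<close> that(2)] .
    have M2: "\<bar>primes_M2 m - L^2 / 2\<bar> \<le> B * (L + 1)"
      unfolding L_def using B[OF \<open>1 \<le> m\<close>] .
    have "0 \<le> A"
      using v by linarith
    have "0 \<le> B * (L + 1)"
      using M2 by linarith
    then have "0 \<le> B"
      using L by (simp add: zero_le_mult_iff)
    have "\<bar>sqrt v - L / sqrt 2\<bar> \<le> \<bar>v - (L / sqrt 2)^2\<bar> / (L / sqrt 2)"
      using L by (intro abs_sqrt_minus_le) (simp_all add: v_def unif_var_nonneg)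
    also have "\<dots> \<le> (A + B * (L + 1)) / (L / sqrt 2)"
    proof (rule divide_right_mono)
      have "(L / sqrt 2)^2 = L^2 / 2"
        by (simp add: power_divide)
      then show "\<bar>v - (L / sqrt 2)^2\<bar> \<le> A + B * (L + 1)"
        using v M2 unfolding abs_le_iff by linarith
    qed (use L in simp)
    also have "\<dots> = sqrt 2 * ((A + B * (L + 1)) / L)"
      by simp
    also have "\<dots> \<le> sqrt 2 * (A + 2 * B)"
    proof -
      have "(A + B) * 1 \<le> (A + B) * L"
        using L \<open>0 \<le> A\<close> \<open>0 \<le> B\<close> by (intro mult_left_mono) auto
      then have "(A + B * (L + 1)) / L \<le> A + 2 * B"
        using L by (simp add: divide_le_eq algebra_simps)
      then show ?thesis
        by (intro mult_left_mono) auto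
    qed
    finally show ?thesis
      by (simp add: v_def L_def)
  qed
  then show ?thesis
    by blast
qed

section \<open>The variance of \<open>ln (Utilde n m k)\<close>\<close>

lemma sqrt_unif_var_ln_rad_between_close:
  "\<exists>C. \<forall>m n. 3 \<le> m \<longrightarrow> m * m \<le> n \<longrightarrow>
    \<bar>sqrt (unif_var {1..n} (ln_rad_between m n)) - ln (real m) / sqrt 2\<bar> \<le> C"
proof -
  obtain D where D: "\<And>n. 1 \<le> n \<Longrightarrow> unif_var {1..n} (\<lambda>k. ln (real k) - ln_power_excess n k) \<le> D"
    using unif_var_ln_minus_power_excess_bounded by blast
  obtain A where A: "\<And>m n. 3 \<le> m \<Longrightarrow> m * m \<le> n \<Longrightarrow>
      \<bar>sqrt (unif_var {1..n} (ln_rad_upto m)) - ln (real m) / sqrt 2\<bar> \<le> A"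
    using sqrt_unif_var_ln_rad_upto_close by blast
  have "\<bar>sqrt (unif_var {1..n} (ln_rad_between m n)) - ln (real m) / sqrt 2\<bar> \<le> sqrt D + A"
    if "3 \<le> m" "m * m \<le> n" for m n
  proof -
    have "m \<le> m * m"
      using that(1) by simp
    then have "m \<le> n" "1 \<le> n"
      using that by linarith+
    then have "unif_var {1..n} (ln_rad_between m n)
        = unif_var {1..n} (\<lambda>k. (ln (real k) - ln_power_excess n k) - ln_rad_upto m k)"
    proof (intro unif_var_cong)
      fix k
      assume "k \<in> {1..n}"
      then show "ln_rad_between m n k = ln (real k) - ln_power_excess n k - ln_rad_upto m k"
        using ln_eq_rad_parts_plus_power_excess[of k n m] \<open>m \<le> n\<close> by simp
    qed
    then have "\<bar>sqrt (unif_var {1..n} (ln_rad_between m n)) - sqrt (unif_var {1..n} (ln_rad_upto m))\<bar>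
        \<le> sqrt (unif_var {1..n} (\<lambda>k. ln (real k) - ln_power_excess n k))"
      by (simp only: sqrt_unif_var_diff_close)
    also have "\<dots> \<le> sqrt D"
      using D[OF \<open>1 \<le> n\<close>] by simp
    finally show ?thesis
      using A[OF that] by linarith
  qed
  then show ?thesis
    by blast
qed

lemma variance_ln_Utilde:
  assumes "1 \<le> n"
  shows "measure_pmf.variance (pmf_of_set {1..n}) (\<lambda>k. ln (real (Utilde n m k)))
    = unif_var {1..n} (ln_rad_between m n)"
proof -
  have "measure_pmf.variance (pmf_of_set {1..n}) (\<lambda>k. ln (real (Utilde n m k)))
      = unif_var {1..n} (\<lambda>k. ln (real (Utilde n m k)))"
    using assms by (intro variance_pmf_of_set) auto
  also have "\<dots> = unif_var {1..n} (ln_rad_between m n)"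
    by (intro unif_var_cong) (simp add: ln_Utilde)
  finally show ?thesis .
qed

lemma eventually_cutoff_bounds:
  fixes m :: "nat \<Rightarrow> nat"
  assumes "\<forall>\<^sub>F n in at_top. real (m n) \<le> sqrt (real n)" and "filterlim m at_top at_top"
  shows "\<forall>\<^sub>F n in at_top. 3 \<le> m n \<and> m n * m n \<le> n"
proof -
  have "\<forall>\<^sub>F n in at_top. 3 \<le> m n"
    using assms(2) by (simp add: filterlim_at_top)
  with assms(1) show ?thesis
  proof eventually_elim
    case (elim n)
    then have "real (m n * m n) \<le> real n"
      using mult_mono[OF elim(1) elim(1)] by simp
    with elim show ?case
      by (simp only: of_nat_le_iff)
  qed
qed

theorem theorem5p4:
  fixes m :: "nat \<Rightarrow> nat"
  assumes "\<forall>\<^sub>F n in at_top. real (m n) \<le> sqrt (real n)"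
    and "filterlim m at_top at_top"
  shows "(\<lambda>n. measure_pmf.variance (pmf_of_set {1..n})
            (\<lambda>k. ln (real (Utilde n (m n) k))))
         \<sim>[at_top] (\<lambda>n. (1/2) * (ln (real (m n)))^2)"
proof -
  define s where "s n = sqrt (unif_var {1..n} (ln_rad_between (m n) n))" for n
  obtain C where C: "\<And>m n. 3 \<le> m \<Longrightarrow> m * m \<le> n \<Longrightarrow>
      \<bar>sqrt (unif_var {1..n} (ln_rad_between m n)) - ln (real m) / sqrt 2\<bar> \<le> C"
    using sqrt_unif_var_ln_rad_between_close by blast
  have "\<forall>\<^sub>F n in at_top. \<bar>s n - ln (real (m n)) / sqrt 2\<bar> \<le> C"
    using eventually_cutoff_bounds[OF assms] unfolding s_def by eventually_elim (rule C; simp)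
  moreover have "filterlim (\<lambda>n. ln (real (m n)) / sqrt 2) at_top at_top"
    using filterlim_at_top_mult_tendsto_pos[OF tendsto_const[of "1 / sqrt 2"] _
        filterlim_compose[OF ln_at_top filterlim_compose[OF filterlim_real_sequentially assms(2)]]]
    by simp
  ultimately have "(\<lambda>n. (s n)^2) \<sim>[at_top] (\<lambda>n. (ln (real (m n)) / sqrt 2)^2)"
    by (intro asymp_equiv_power asymp_equiv_of_bounded_diff)
  moreover have "\<forall>\<^sub>F n in at_top. (s n)^2
      = measure_pmf.variance (pmf_of_set {1..n}) (\<lambda>k. ln (real (Utilde n (m n) k)))"
    using eventually_ge_at_top[of 1]
    by eventually_elim (simp add: s_def unif_var_nonneg variance_ln_Utilde del: One_nat_def)
  ultimately show ?thesis
    by (rule asymp_equiv_transfer) (simp add: power_divide)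
qed

end
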